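(* Let $0\le c<1$ and $0\le\delta\le q$ with $q>0$, and let $\mathbf A(\mu)=\begin{bmatrix}0&1-\delta\mu\\-c&1+c-q\mu\end{bmatrix}$. For any $k\ge1$ and any $\mu_1,\dots,\mu_k\in\big[0,\frac{(1-c)^2}{q-c\delta}\big]$, $$\Big\|\prod_{i=1}^k\mathbf A(\mu_i)\Big\|\le\frac{4}{1-c}.$$
   Context: $\|\cdot\|$ denotes the spectral norm; the product is an ordered matrix product. *)

theory Defs
  imports "HOL-Analysis.Analysis"
begin

definition Amat :: "real \<Rightarrow> real \<Rightarrow> real \<Rightarrow> real \<Rightarrow> real^2^2" where
  "Amat c \<delta> q \<mu> = vector [vector [0, 1 - \<delta> * \<mu>], vector [- c, 1 + c - q * \<mu>]]"

definition Aprod :: "real \<Rightarrow> real \<Rightarrow> real \<Rightarrow> real list \<Rightarrow> real^2^2" where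
  "Aprod c \<delta> q mus = foldr (\<lambda>\<mu> M. Amat c \<delta> q \<mu> ** M) mus (mat 1)"

definition spec_norm :: "real^2^2 \<Rightarrow> real" where
  "spec_norm M = onorm (\<lambda>x. M *v x)"

end

theory Submission
  imports Defs
begin

text \<open>
  In the coordinates \<open>\<alpha> = x\<^sub>2 - c x\<^sub>1\<close>, \<open>\<beta> = x\<^sub>1 - x\<^sub>2\<close>, one multiplication by \<open>A(\<mu>)\<close> sends
  \<open>(\<alpha>, \<beta>)\<close> to \<open>(\<alpha> - p x\<^sub>2, c \<beta> + r x\<^sub>2)\<close> with \<open>p = \<mu> (q - c \<delta>)\<close> and \<open>r = \<mu> (q - \<delta>)\<close>,
  and the step-size bound says exactly \<open>0 \<le> r \<le> p \<le> (1 - c)\<^sup>2\<close>. Under these constraints the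
  Lyapunov function \<open>V = \<alpha>\<^sup>2 + \<beta>\<^sup>2\<close> does not increase: the decrease is a binary quadratic
  form with nonpositive discriminant. Since
  \<open>(1 - c)\<^sup>2 \<parallel>x\<parallel>\<^sup>2 / 4 \<le> V(x) \<le> 4 \<parallel>x\<parallel>\<^sup>2\<close>, every product of the matrices stretches
  vectors by at most \<open>4 / (1 - c)\<close>.
\<close>

definition lyapunov :: "real \<Rightarrow> real^2 \<Rightarrow> real" where
  "lyapunov c x = (x$2 - c * x$1)^2 + (x$1 - x$2)^2"

lemma norm_vec2_squared: "(norm (x::real^2))^2 = (x$1)^2 + (x$2)^2"
  by (simp add: norm_vec_def L2_set_def sum_2)

lemma Amat_mult_vec_nth:
  "(Amat c \<delta> q \<mu> *v x)$1 = (1 - \<delta> * \<mu>) * x$2"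
  "(Amat c \<delta> q \<mu> *v x)$2 = - c * x$1 + (1 + c - q * \<mu>) * x$2"
  by (simp_all add: Amat_def matrix_vector_mult_def sum_2)

lemma binary_quadratic_form_nonneg:
  fixes a b c x y :: "'a::linordered_field"
  assumes "0 < a" and "b^2 \<le> a * c"
  shows "0 \<le> a * x^2 + 2 * b * x * y + c * y^2"
proof -
  have "a * (a * x^2 + 2 * b * x * y + c * y^2) = (a * x + b * y)^2 + (a * c - b^2) * y^2"
    by (simp add: algebra_simps power2_eq_square)
  also have "\<dots> \<ge> 0"
    using assms(2) by simp
  finally show ?thesis
    using assms(1) by (simp add: zero_le_mult_iff)
qed

lemma lyapunov_step_discriminant:
  fixes c p r :: real
  assumes "0 \<le> c" "c < 1" "0 \<le> r" "r \<le> p" "p \<le> (1 - c)^2"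
  shows "(c * (p + r))^2 \<le> (1 - c^2) * (2 * p * (1 - c) - p^2 - r^2)"
proof -
  have c2: "c^2 \<le> c"
    using assms by (simp add: power2_eq_square mult_left_le_one_le)
  have "(c * (p + r))^2 = c^2 * (p + r)^2"
    by (rule power_mult_distrib)
  also have "\<dots> \<le> c^2 * (2 * p)^2"
    using assms by (intro mult_left_mono power_mono) auto
  also have "\<dots> \<le> (1 - c^2) * (2 * p * (1 - c) - 2 * p^2)"
  proof -
    have "(1 - c^2) * (2 * p * (1 - c) - 2 * p^2) - c^2 * (2 * p)^2
        = 2 * p * ((1 - c)^2 * (c - c^2) + (1 - c)^2 * (1 + c^2) - p * (1 + c^2))"
      by (simp add: algebra_simps power2_eq_square)
    moreover have "0 \<le> 2 * p * ((1 - c)^2 * (c - c^2) + (1 - c)^2 * (1 + c^2) - p * (1 + c^2))"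
    proof -
      have "0 \<le> (1 - c)^2 * (c - c^2)"
        using c2 by simp
      moreover have "p * (1 + c^2) \<le> (1 - c)^2 * (1 + c^2)"
        using assms by (intro mult_right_mono) auto
      ultimately show ?thesis
        using assms by (intro mult_nonneg_nonneg) linarith+
    qed
    ultimately show ?thesis
      by linarith
  qed
  also have "\<dots> \<le> (1 - c^2) * (2 * p * (1 - c) - p^2 - r^2)"
    using assms c2 by (intro mult_left_mono) (auto simp: power_mono)
  finally show ?thesis .
qed

lemma lyapunov_step_ineq:
  fixes c p r a b :: real
  assumes "0 \<le> c" "c < 1" "0 \<le> r" "r \<le> p" "p \<le> (1 - c)^2"
  shows "((b - c * a) - p * b)^2 + (c * (a - b) + r * b)^2 \<le> (b - c * a)^2 + (a - b)^2"
proof -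
  have "0 \<le> (1 - c^2) * (a - b)^2 + 2 * (- c * (p + r)) * (a - b) * b
                + (2 * p * (1 - c) - p^2 - r^2) * b^2"
    using assms lyapunov_step_discriminant[OF assms]
    by (intro binary_quadratic_form_nonneg) (simp_all add: abs_square_less_1)
  then show ?thesis
    by (simp add: algebra_simps power2_eq_square)
qed

lemma lyapunov_Amat_le:
  assumes "0 \<le> c" "c < 1" "0 \<le> \<delta>" "\<delta> \<le> q" "0 < q"
    and "0 \<le> \<mu>" "\<mu> \<le> (1 - c)^2 / (q - c * \<delta>)"
  shows "lyapunov c (Amat c \<delta> q \<mu> *v x) \<le> lyapunov c x"
proof -
  have "c * \<delta> \<le> c * q"
    using assms by (intro mult_left_mono)
  also have "\<dots> < q"
    using assms by simp
  finally have "c * \<delta> < q" .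
  define p where "p = \<mu> * (q - c * \<delta>)"
  define r where "r = \<mu> * (q - \<delta>)"
  have p_le: "p \<le> (1 - c)^2"
    using assms \<open>c * \<delta> < q\<close> unfolding p_def by (simp add: pos_le_divide_eq)
  have r_nonneg: "0 \<le> r" and r_le: "r \<le> p"
    unfolding r_def p_def using assms by (auto intro: mult_left_mono simp: mult_left_le_one_le)
  have "(Amat c \<delta> q \<mu> *v x)$2 - c * (Amat c \<delta> q \<mu> *v x)$1 = (x$2 - c * x$1) - p * x$2"
    "(Amat c \<delta> q \<mu> *v x)$1 - (Amat c \<delta> q \<mu> *v x)$2 = c * (x$1 - x$2) + r * x$2"
    unfolding Amat_mult_vec_nth p_def r_def by (simp_all add: algebra_simps)
  then show ?thesis
    unfolding lyapunov_def using lyapunov_step_ineq[OF assms(1,2) r_nonneg r_le p_le] by simp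
qed

lemma lyapunov_Aprod_le:
  assumes "0 \<le> c" "c < 1" "0 \<le> \<delta>" "\<delta> \<le> q" "0 < q"
    and "\<forall>\<mu> \<in> set mus. 0 \<le> \<mu> \<and> \<mu> \<le> (1 - c)^2 / (q - c * \<delta>)"
  shows "lyapunov c (Aprod c \<delta> q mus *v x) \<le> lyapunov c x"
  using assms(6)
proof (induction mus)
  case Nil
  then show ?case by (simp add: Aprod_def)
next
  case (Cons \<mu> mus)
  have "lyapunov c (Aprod c \<delta> q (\<mu> # mus) *v x)
      = lyapunov c (Amat c \<delta> q \<mu> *v (Aprod c \<delta> q mus *v x))"
    by (simp add: Aprod_def matrix_vector_mul_assoc)
  also have "\<dots> \<le> lyapunov c (Aprod c \<delta> q mus *v x)"
    using Cons.prems assms by (intro lyapunov_Amat_le) auto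
  also have "\<dots> \<le> lyapunov c x"
    using Cons by simp
  finally show ?case .
qed

lemma lyapunov_le_norm:
  assumes "\<bar>c\<bar> \<le> 1"
  shows "lyapunov c x \<le> 4 * (norm x)^2"
proof -
  have "(c * x$1)^2 \<le> (x$1)^2"
    using assms by (simp add: power_mult_distrib abs_square_le_1 mult_left_le_one_le)
  moreover have "(x$2 - c * x$1)^2 \<le> 2 * (x$2)^2 + 2 * (c * x$1)^2"
    "(x$1 - x$2)^2 \<le> 2 * (x$1)^2 + 2 * (x$2)^2"
    using sum_squares_ge_zero[of "x$2 + c * x$1" 0] sum_squares_ge_zero[of "x$1 + x$2" 0]
    by (simp_all add: power2_eq_square algebra_simps)
  ultimately show ?thesis
    unfolding lyapunov_def norm_vec2_squared by simp
qed

lemma norm_le_lyapunov: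
  assumes "\<bar>c\<bar> \<le> 1"
  shows "(1 - c)^2 * (norm x)^2 \<le> 4 * lyapunov c x"
proof -
  define \<alpha> where "\<alpha> = x$2 - c * x$1"
  define \<beta> where "\<beta> = x$1 - x$2"
  have "(1 - c)^2 * (norm x)^2 = (\<alpha> + \<beta>)^2 + (\<alpha> + c * \<beta>)^2"
    unfolding norm_vec2_squared \<alpha>_def \<beta>_def by (simp add: algebra_simps power2_eq_square)
  also have "\<dots> \<le> 2 * (\<alpha>^2 + \<beta>^2) + 2 * (\<alpha>^2 + (c * \<beta>)^2)"
    using sum_squares_ge_zero[of "\<alpha> - \<beta>" 0] sum_squares_ge_zero[of "\<alpha> - c * \<beta>" 0]
    by (simp add: power2_eq_square algebra_simps)
  also have "\<dots> \<le> 4 * (\<alpha>^2 + \<beta>^2)"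
    using assms by (simp add: power_mult_distrib abs_square_le_1 mult_left_le_one_le)
  finally show ?thesis
    unfolding lyapunov_def \<alpha>_def \<beta>_def .
qed

lemma norm_Aprod_mult_vec_le:
  assumes "0 \<le> c" "c < 1" "0 \<le> \<delta>" "\<delta> \<le> q" "0 < q"
    and "\<forall>\<mu> \<in> set mus. 0 \<le> \<mu> \<and> \<mu> \<le> (1 - c)^2 / (q - c * \<delta>)"
  shows "norm (Aprod c \<delta> q mus *v x) \<le> 4 / (1 - c) * norm x"
proof -
  let ?y = "Aprod c \<delta> q mus *v x"
  have c: "\<bar>c\<bar> \<le> 1"
    using assms by simp
  have "((1 - c) * norm ?y)^2 \<le> 4 * lyapunov c ?y"
    using norm_le_lyapunov[OF c] by (simp add: power_mult_distrib)
  also have "\<dots> \<le> 4 * lyapunov c x"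
    using lyapunov_Aprod_le[OF assms] by simp
  also have "\<dots> \<le> (4 * norm x)^2"
    using lyapunov_le_norm[OF c] by (simp add: power_mult_distrib)
  finally have "(1 - c) * norm ?y \<le> 4 * norm x"
    by (rule power2_le_imp_le) simp
  then show ?thesis
    using assms(2) by (simp add: field_simps)
qed

theorem mainTheorem9:
  fixes c \<delta> q :: real and mus :: "real list"
  assumes "0 \<le> c" "c < 1" "0 \<le> \<delta>" "\<delta> \<le> q" "q > 0"
    and "length mus \<ge> 1"
    and "\<forall>\<mu> \<in> set mus. 0 \<le> \<mu> \<and> \<mu> \<le> (1 - c)^2 / (q - c * \<delta>)"
  shows "spec_norm (Aprod c \<delta> q mus) \<le> 4 / (1 - c)"
  \<comment> \<open>The bound holds for the empty product as well.\<close>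
  unfolding spec_norm_def
  using norm_Aprod_mult_vec_le[OF assms(1-5,7)] by (rule onorm_le)

end
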